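(* Let $G$ be a graph with connected components $G_1,\ldots,G_k$, where $G_1,\ldots,G_i$ ($i\geq 0$) are isolated vertices and $G_{i+1},\ldots,G_k$ each have at least two vertices. Then \[ \operatorname{cdim}(G)=\max\{i-1,0\}+\sum_{j=i+1}^{k}\operatorname{cdim}(G_j). \]
   Context: All graphs are finite, simple, undirected and nonempty. For distinct vertices $v,w$ of a graph $G$, $\kappa(v,w)=\kappa_G(v,w)$ is the maximum number of internally vertex-disjoint $v$–$w$ paths in $G$ (so $\kappa(v,w)=0$ if $v,w$ lie in different components; if $v,w$ are adjacent the edge $vw$ counts as one such path); by convention $\kappa(v,v)=\infty$. For an ordered vertex set $W=(w_1,\ldots,w_k)$, the connectivity representation of $v$ is $r_G(v,W)=[\kappa(v,w_1),\ldots,\kappa(v,w_k)]$. $W$ is resolving for $G$ if $r_G(v_1,W)=r_G(v_2,W)$ implies $v_1=v_2$ for all $v_1,v_2\in V(G)$ (the empty set is resolving for the one-vertex graph). A resolving set of minimum cardinality is a (connectivity) basis, and the connectivity dimension $\operatorname{cdim}(G)$ is the cardinality of a basis. *)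

theory Defs
  imports Main "HOL-Library.Extended_Nat"
begin

definition graph :: "'a set \<Rightarrow> ('a \<times> 'a) set \<Rightarrow> bool" where
  "graph V E \<longleftrightarrow> finite V \<and> V \<noteq> {} \<and> E \<subseteq> V \<times> V \<and> sym E \<and> irrefl E"

definition is_path :: "'a set \<Rightarrow> ('a \<times> 'a) set \<Rightarrow> 'a \<Rightarrow> 'a \<Rightarrow> 'a list \<Rightarrow> bool" where
  "is_path V E v w p \<longleftrightarrow> p \<noteq> [] \<and> hd p = v \<and> last p = w \<and> distinct p \<and> set p \<subseteq> V \<and>
     (\<forall>i. Suc i < length p \<longrightarrow> (p ! i, p ! Suc i) \<in> E)"

definition internal :: "'a list \<Rightarrow> 'a set" where
  "internal p = set (butlast (tl p))"

definition disjoint_paths :: "'a set \<Rightarrow> ('a \<times> 'a) set \<Rightarrow> 'a \<Rightarrow> 'a \<Rightarrow> 'a list set \<Rightarrow> bool" where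
  "disjoint_paths V E v w P \<longleftrightarrow> finite P \<and> (\<forall>p\<in>P. is_path V E v w p) \<and>
     (\<forall>p\<in>P. \<forall>q\<in>P. p \<noteq> q \<longrightarrow> internal p \<inter> internal q = {})"

definition kappa :: "'a set \<Rightarrow> ('a \<times> 'a) set \<Rightarrow> 'a \<Rightarrow> 'a \<Rightarrow> enat" where
  "kappa V E v w = (if v = w then \<infinity> else enat (Max {card P | P. disjoint_paths V E v w P}))"

definition resolving :: "'a set \<Rightarrow> ('a \<times> 'a) set \<Rightarrow> 'a set \<Rightarrow> bool" where
  "resolving V E W \<longleftrightarrow> W \<subseteq> V \<and>
     (\<forall>v1\<in>V. \<forall>v2\<in>V. (\<forall>w\<in>W. kappa V E v1 w = kappa V E v2 w) \<longrightarrow> v1 = v2)"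

definition cdim :: "'a set \<Rightarrow> ('a \<times> 'a) set \<Rightarrow> nat" where
  "cdim V E = Min {card W | W. resolving V E W}"

definition components :: "'a set \<Rightarrow> ('a \<times> 'a) set \<Rightarrow> 'a set set" where
  "components V E = (\<lambda>v. {u \<in> V. (v, u) \<in> E\<^sup>*}) ` V"

definition induced_edges :: "('a \<times> 'a) set \<Rightarrow> 'a set \<Rightarrow> ('a \<times> 'a) set" where
  "induced_edges E C = E \<inter> (C \<times> C)"

end

theory Submission
  imports Defs
begin

text \<open>The connectivity \<open>\<kappa>(v, w)\<close> is \<open>\<infinity>\<close> exactly for \<open>v = w\<close> and \<open>0\<close> exactly when \<open>v\<close> and \<open>w\<close>
  lie in different components; inside a component it agrees with the connectivity of the
  component. Hence \<open>W\<close> resolves \<open>G\<close> iff \<open>W \<inter> C\<close> resolves every component \<open>C\<close> with at least two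
  vertices and at most one isolated vertex lies outside \<open>W\<close> (two such vertices would both have
  the all-zero representation). So a basis of \<open>G\<close> meets each nontrivial \<open>C\<close> in at least
  \<open>cdim C\<close> vertices and contains all isolated vertices but one, while conversely the union of
  bases of the nontrivial components with all isolated vertices but one is resolving.\<close>

lemma is_path_reachable:
  assumes "is_path V E v w p" "x \<in> set p"
  shows "(v, x) \<in> E\<^sup>*"
proof -
  have "(v, p ! i) \<in> E\<^sup>*" if "i < length p" for i
    using that
  proof (induction i)
    case 0
    then show ?case using assms(1) by (simp add: is_path_def hd_conv_nth)
  next
    case (Suc i)
    then show ?case using assms(1) unfolding is_path_def
      by (meson Suc_lessD rtrancl.rtrancl_into_rtrancl)
  qed
  then show ?thesis using assms(2) by (metis in_set_conv_nth)
qed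

lemma is_path_drop:
  assumes "is_path V E v w p" "k < length p"
  shows "is_path V E (p ! k) w (drop k p)"
  using assms unfolding is_path_def
  by (auto simp: hd_drop_conv_nth dest: in_set_dropD)

lemma is_path_Cons:
  assumes "is_path V E z w p" "(y, z) \<in> E" "y \<in> V" "y \<notin> set p"
  shows "is_path V E y w (y # p)"
  using assms unfolding is_path_def
  by (auto simp: nth_Cons hd_conv_nth split: nat.split)

lemma reachable_imp_is_path:
  assumes "(v, w) \<in> E\<^sup>*" "E \<subseteq> V \<times> V" "w \<in> V"
  shows "\<exists>p. is_path V E v w p"
  using assms(1)
proof (induction rule: converse_rtrancl_induct)
  case base
  show ?case using assms(3) by (intro exI[of _ "[w]"]) (simp add: is_path_def)
next
  case (step y z)
  then obtain p where p: "is_path V E z w p" by blast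
  show ?case
  proof (cases "y \<in> set p")
    case True
    then obtain k where "k < length p" "p ! k = y" by (metis in_set_conv_nth)
    then show ?thesis using is_path_drop[OF p] by metis
  next
    case False
    then show ?thesis using is_path_Cons[OF p step(1)] step(1) assms(2) by blast
  qed
qed

lemma finite_disjoint_paths_cards:
  assumes "finite V"
  shows "finite {card P | P. disjoint_paths V E v w P}"
proof -
  let ?paths = "{p. set p \<subseteq> V \<and> length p \<le> card V}"
  have "p \<in> ?paths" if "is_path V E v w p" for p
  proof -
    have "set p \<subseteq> V" "distinct p" using that unfolding is_path_def by auto
    then show ?thesis using card_mono[OF assms] by (simp add: distinct_card[symmetric])
  qed
  then have "card P \<le> card ?paths" if "disjoint_paths V E v w P" for P
    using that card_mono[OF finite_lists_length_le[OF assms]] unfolding disjoint_paths_def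
    by (meson subsetI)
  then have "{card P | P. disjoint_paths V E v w P} \<subseteq> {..card ?paths}" by auto
  then show ?thesis using finite_subset by blast
qed

lemma kappa_eq_infinity_iff: "kappa V E v w = \<infinity> \<longleftrightarrow> v = w"
  unfolding kappa_def by simp

lemma kappa_self [simp]: "kappa V E v v = \<infinity>"
  by (simp add: kappa_eq_infinity_iff)

lemma kappa_eq_0_if_unreachable:
  assumes "(v, w) \<notin> E\<^sup>*"
  shows "kappa V E v w = 0"
proof -
  have "\<not> is_path V E v w p" for p
    using is_path_reachable[of V E v w p w] assms unfolding is_path_def by auto
  then have "disjoint_paths V E v w P \<longleftrightarrow> P = {}" for P
    unfolding disjoint_paths_def by auto
  moreover have "v \<noteq> w" using assms by auto
  ultimately show ?thesis unfolding kappa_def by (simp add: zero_enat_def)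
qed

lemma kappa_neq_0_if_reachable:
  assumes "finite V" "E \<subseteq> V \<times> V" "(v, w) \<in> E\<^sup>*" "w \<in> V"
  shows "kappa V E v w \<noteq> 0"
proof (cases "v = w")
  case False
  obtain p where "is_path V E v w p" using reachable_imp_is_path[OF assms(3,2,4)] by blast
  then have "disjoint_paths V E v w {p}" by (simp add: disjoint_paths_def)
  then have "card {p} \<in> {card P | P. disjoint_paths V E v w P}"
    by (intro CollectI exI[of _ "{p}"]) simp
  then have "1 \<le> Max {card P | P. disjoint_paths V E v w P}"
    using Max_ge[OF finite_disjoint_paths_cards[OF assms(1)]] by simp
  then show ?thesis using False unfolding kappa_def by (simp add: zero_enat_def)
qed (simp add: kappa_def)

definition component_of :: "'a set \<Rightarrow> ('a \<times> 'a) set \<Rightarrow> 'a \<Rightarrow> 'a set" where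
  "component_of V E v = {u \<in> V. (v, u) \<in> E\<^sup>*}"

lemma components_eq_image_component_of: "components V E = component_of V E ` V"
  unfolding components_def component_of_def ..

lemma component_of_subset: "component_of V E v \<subseteq> V"
  unfolding component_of_def by blast

lemma mem_component_of_self: "v \<in> V \<Longrightarrow> v \<in> component_of V E v"
  unfolding component_of_def by simp

lemma is_path_induced_component:
  assumes "C = component_of V E c" "v \<in> C"
  shows "is_path C (induced_edges E C) v w p \<longleftrightarrow> is_path V E v w p"
proof
  assume p: "is_path V E v w p"
  have "x \<in> C" if "x \<in> set p" for x
  proof -
    have "(c, v) \<in> E\<^sup>*" using assms unfolding component_of_def by simp
    then have "(c, x) \<in> E\<^sup>*" using is_path_reachable[OF p that] by (rule rtrancl_trans)
    moreover have "x \<in> V" using p that unfolding is_path_def by blast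
    ultimately show ?thesis using assms(1) unfolding component_of_def by simp
  qed
  then have "(p ! i, p ! Suc i) \<in> C \<times> C" if "Suc i < length p" for i
    using that by simp
  then show "is_path C (induced_edges E C) v w p"
    using p \<open>\<And>x. x \<in> set p \<Longrightarrow> x \<in> C\<close> unfolding is_path_def induced_edges_def by blast
next
  assume "is_path C (induced_edges E C) v w p"
  then show "is_path V E v w p"
    using assms unfolding is_path_def induced_edges_def component_of_def by blast
qed

lemma kappa_induced_component:
  assumes "C = component_of V E c" "v \<in> C"
  shows "kappa C (induced_edges E C) v w = kappa V E v w"
  unfolding kappa_def disjoint_paths_def is_path_induced_component[OF assms] ..

lemma resolving_self: "resolving V E V"
  unfolding resolving_def
proof (intro conjI subset_refl ballI impI)
  fix v1 v2 assume "v1 \<in> V" "\<forall>w\<in>V. kappa V E v1 w = kappa V E v2 w"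
  then have "kappa V E v2 v1 = \<infinity>" by (metis kappa_self)
  then show "v1 = v2" by (simp add: kappa_eq_infinity_iff)
qed

lemma resolving_mono:
  assumes "resolving V E W" "W \<subseteq> W'" "W' \<subseteq> V"
  shows "resolving V E W'"
  using assms unfolding resolving_def by blast

lemma resolving_nonempty:
  assumes "finite V" "card V \<ge> 2" "resolving V E W"
  shows "W \<noteq> {}"
  using assms card_le_Suc0_iff_eq[OF assms(1)] unfolding resolving_def by force

lemma finite_resolving_cards:
  assumes "finite V"
  shows "finite {card W | W. resolving V E W}"
proof -
  have "{card W | W. resolving V E W} \<subseteq> {..card V}"
    using card_mono[OF assms] unfolding resolving_def by auto
  then show ?thesis using finite_subset by blast
qed

lemma cdim_le_card:
  assumes "finite V" "resolving V E W"
  shows "cdim V E \<le> card W"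
  unfolding cdim_def using assms finite_resolving_cards by (auto intro: Min_le)

lemma obtain_basis:
  assumes "finite V"
  obtains W where "resolving V E W" "card W = cdim V E"
proof -
  have "cdim V E \<in> {card W | W. resolving V E W}"
    unfolding cdim_def using finite_resolving_cards[OF assms] resolving_self by (intro Min_in) auto
  then show ?thesis using that by force
qed

lemma card_minus_one_le_sum:
  fixes f :: "'b \<Rightarrow> nat"
  assumes "finite S" "card {x \<in> S. f x = 0} \<le> 1"
  shows "card S - 1 \<le> sum f S"
proof -
  let ?Z = "{x \<in> S. f x = 0}"
  have "card S - 1 \<le> card (S - ?Z)"
    using assms diff_card_le_card_Diff[of ?Z S] by simp
  also have "\<dots> = (\<Sum>x\<in>S - ?Z. 1)" by simp
  also have "\<dots> \<le> sum f (S - ?Z)" by (intro sum_mono) auto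
  also have "\<dots> \<le> sum f S" using assms(1) by (intro sum_mono2) auto
  finally show ?thesis .
qed

locale simple_graph =
  fixes V :: "'a set" and E :: "('a \<times> 'a) set"
  assumes graph: "graph V E"
begin

lemma finite_vertices: "finite V"
  and edges_subset: "E \<subseteq> V \<times> V"
  and sym_edges: "sym E"
  using graph unfolding graph_def by auto

lemma finite_component_of: "finite (component_of V E v)"
  using finite_subset[OF component_of_subset[of V E] finite_vertices] .

lemma component_of_eq_iff:
  assumes "u \<in> V" "v \<in> V"
  shows "component_of V E u = component_of V E v \<longleftrightarrow> (u, v) \<in> E\<^sup>*"
proof -
  have "(v, u) \<in> E\<^sup>*" if "(u, v) \<in> E\<^sup>*"
    using that sym_edges sym_rtrancl by (metis symD)
  then show ?thesis
    using assms unfolding component_of_def by (blast intro: rtrancl_trans)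
qed

lemma finite_components: "finite (components V E)"
  unfolding components_eq_image_component_of using finite_vertices by simp

lemma finite_component: "C \<in> components V E \<Longrightarrow> finite C"
  unfolding components_eq_image_component_of using finite_component_of by blast

lemma component_subset: "C \<in> components V E \<Longrightarrow> C \<subseteq> V"
  unfolding components_eq_image_component_of using component_of_subset[of V E] by blast

lemma component_of_in_components: "v \<in> V \<Longrightarrow> component_of V E v \<in> components V E"
  unfolding components_eq_image_component_of by blast

lemma component_eq_component_of:
  assumes "C \<in> components V E" "v \<in> C"
  shows "C = component_of V E v"
  using assms component_of_eq_iff unfolding components_eq_image_component_of component_of_def
  by auto

lemma kappa_eq_0_iff:
  assumes "w \<in> V"
  shows "kappa V E v w = 0 \<longleftrightarrow> w \<notin> component_of V E v"
  using assms kappa_eq_0_if_unreachable[of v w E V]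
    kappa_neq_0_if_reachable[OF finite_vertices edges_subset, of v w]
  unfolding component_of_def by blast

lemma card_eq_sum_components:
  assumes "W \<subseteq> V"
  shows "card W = (\<Sum>C\<in>components V E. card (W \<inter> C))"
proof -
  have "W = (\<Union>C\<in>components V E. W \<inter> C)"
    using assms mem_component_of_self[of _ V E] component_of_in_components by blast
  also have "card \<dots> = (\<Sum>C\<in>components V E. card (W \<inter> C))"
  proof (rule card_UN_disjoint[OF finite_components])
    show "\<forall>C\<in>components V E. finite (W \<inter> C)" using finite_component by blast
    show "\<forall>C\<in>components V E. \<forall>D\<in>components V E. C \<noteq> D \<longrightarrow> W \<inter> C \<inter> (W \<inter> D) = {}"
      using component_eq_component_of by blast
  qed
  finally show ?thesis .
qed

lemma component_of_eq_singleton: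
  assumes "v \<in> V" "card (component_of V E v) < 2"
  shows "component_of V E v = {v}"
proof -
  have "card (component_of V E v) > 0"
    using mem_component_of_self[OF assms(1), of E] finite_component_of card_gt_0_iff by blast
  then have "card (component_of V E v) = 1" using assms(2) by linarith
  then show ?thesis
    using mem_component_of_self[OF assms(1), of E] by (auto simp: card_1_singleton_iff)
qed

lemma resolving_Int_component:
  assumes "resolving V E W" "C \<in> components V E"
  shows "resolving C (induced_edges E C) (W \<inter> C)"
  unfolding resolving_def
proof (intro conjI ballI impI Int_lower2)
  fix v1 v2
  assume v: "v1 \<in> C" "v2 \<in> C"
    and same: "\<forall>w\<in>W \<inter> C. kappa C (induced_edges E C) v1 w = kappa C (induced_edges E C) v2 w"
  have C: "C = component_of V E v1" "C = component_of V E v2"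
    using component_eq_component_of[OF assms(2)] v by auto
  have "kappa V E v1 w = kappa V E v2 w" if "w \<in> W" for w
  proof (cases "w \<in> C")
    case True
    then show ?thesis
      using same \<open>w \<in> W\<close> kappa_induced_component[OF C(1) v(1)] kappa_induced_component[OF C(2) v(2)]
      by simp
  next
    case False
    have "w \<in> V" using assms(1) \<open>w \<in> W\<close> unfolding resolving_def by blast
    then show ?thesis using False kappa_eq_0_iff[of w v1] kappa_eq_0_iff[of w v2] C by simp
  qed
  moreover have "v1 \<in> V" "v2 \<in> V" using v C component_of_subset[of V E] by auto
  ultimately show "v1 = v2" using assms(1) unfolding resolving_def by blast
qed

lemma resolving_isolated_unique:
  assumes "resolving V E W" "{a} \<in> components V E" "{b} \<in> components V E" "a \<notin> W" "b \<notin> W"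
  shows "a = b"
proof -
  have a: "component_of V E a = {a}" and b: "component_of V E b = {b}"
    using component_eq_component_of[OF assms(2)] component_eq_component_of[OF assms(3)] by auto
  have "kappa V E a w = kappa V E b w" if "w \<in> W" for w
  proof -
    have "w \<in> V" "w \<noteq> a" "w \<noteq> b" using assms(1,4,5) that unfolding resolving_def by auto
    then show ?thesis using kappa_eq_0_iff[of w a] kappa_eq_0_iff[of w b] a b by simp
  qed
  moreover have "a \<in> V" "b \<in> V" using a b component_of_subset[of V E] by blast+
  ultimately show ?thesis using assms(1) unfolding resolving_def by blast
qed

text \<open>The resolving set of a nontrivial component is nonempty, and its vertices have nonzero
  connectivity exactly to the vertices of that component; so it detects the component of \<open>v2\<close>.\<close>
lemma resolved_by_nontrivial_component:
  assumes C: "C = component_of V E v1" "card C \<ge> 2"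
    and res: "resolving C (induced_edges E C) (W \<inter> C)"
    and v: "v1 \<in> V" "v2 \<in> V" and same: "\<forall>w\<in>W. kappa V E v1 w = kappa V E v2 w"
  shows "v1 = v2"
proof -
  have "finite C" using C(1) finite_component_of by simp
  then obtain w where w: "w \<in> W" "w \<in> C" using resolving_nonempty[OF _ C(2) res] by blast
  have "w \<in> V" using w(2) C(1) component_of_subset[of V E] by blast
  have "kappa V E v1 w \<noteq> 0" using kappa_eq_0_iff[OF \<open>w \<in> V\<close>, of v1] w(2) C(1) by simp
  then have "kappa V E v2 w \<noteq> 0" using same w(1) by simp
  then have "w \<in> component_of V E v2" using kappa_eq_0_iff[OF \<open>w \<in> V\<close>, of v2] by simp
  then have C2: "C = component_of V E v2"
    using component_eq_component_of[OF component_of_in_components[OF v(2)]]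
      component_eq_component_of[OF component_of_in_components[OF v(1)]] w(2) C(1) by metis
  have "v1 \<in> C" "v2 \<in> C" using mem_component_of_self[of _ V E] v C(1) C2 by auto
  then have "\<forall>w\<in>W \<inter> C. kappa C (induced_edges E C) v1 w = kappa C (induced_edges E C) v2 w"
    using same kappa_induced_component[OF C(1)] kappa_induced_component[OF C2] by simp
  then show ?thesis using res \<open>v1 \<in> C\<close> \<open>v2 \<in> C\<close> unfolding resolving_def by blast
qed

lemma resolving_by_components:
  assumes "W \<subseteq> V"
    and nontrivial: "\<And>C. C \<in> components V E \<Longrightarrow> card C \<ge> 2 \<Longrightarrow>
      resolving C (induced_edges E C) (W \<inter> C)"
    and isolated: "\<And>a b. {a} \<in> components V E \<Longrightarrow> {b} \<in> components V E \<Longrightarrow>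
      a \<notin> W \<Longrightarrow> b \<notin> W \<Longrightarrow> a = b"
  shows "resolving V E W"
  unfolding resolving_def
proof (intro conjI ballI impI assms(1))
  fix v1 v2
  assume v: "v1 \<in> V" "v2 \<in> V" and same: "\<forall>w\<in>W. kappa V E v1 w = kappa V E v2 w"
  then have same': "\<forall>w\<in>W. kappa V E v2 w = kappa V E v1 w" by simp
  have trivial: "component_of V E v = {v}" if "v \<in> V" "\<not> card (component_of V E v) \<ge> 2" for v
    using component_of_eq_singleton that by simp
  consider "card (component_of V E v1) \<ge> 2" | "card (component_of V E v2) \<ge> 2"
    | "component_of V E v1 = {v1}" "component_of V E v2 = {v2}"
    using trivial[OF v(1)] trivial[OF v(2)] by blast
  then show "v1 = v2"
  proof cases
    case 1
    show ?thesis
      using resolved_by_nontrivial_component[OF refl 1 nontrivial[OF component_of_in_components[OF v(1)] 1]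
          v same] .
  next
    case 2
    show ?thesis
      using resolved_by_nontrivial_component[OF refl 2 nontrivial[OF component_of_in_components[OF v(2)] 2]
          v(2,1) same'] by simp
  next
    case 3
    then have isolated: "{v1} \<in> components V E" "{v2} \<in> components V E"
      using component_of_in_components v by metis+
    show ?thesis
    proof (cases "v1 \<in> W \<or> v2 \<in> W")
      case True
      then have "kappa V E v2 v1 = \<infinity> \<or> kappa V E v1 v2 = \<infinity>"
        using same by (metis kappa_self)
      then show ?thesis by (auto simp: kappa_eq_infinity_iff)
    qed (use isolated assms(3) in blast)
  qed
qed

lemma cdim_lower_bound:
  "card {C \<in> components V E. card C = 1} - 1
     + (\<Sum>C\<in>{C \<in> components V E. card C \<ge> 2}. cdim C (induced_edges E C)) \<le> cdim V E"
proof -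
  let ?S1 = "{C \<in> components V E. card C = 1}" and ?S2 = "{C \<in> components V E. card C \<ge> 2}"
  obtain W where W: "resolving V E W" "card W = cdim V E"
    using obtain_basis[OF finite_vertices] by blast
  have WV: "W \<subseteq> V" using W(1) unfolding resolving_def by blast
  let ?Z = "{C \<in> ?S1. card (W \<inter> C) = 0}"
  have "C = D" if "C \<in> ?Z" "D \<in> ?Z" for C D
  proof -
    have "card C = Suc 0" "card D = Suc 0" using that by auto
    then obtain a b where "C = {a}" "D = {b}" unfolding card_1_singleton_iff by blast
    then show ?thesis
      using that resolving_isolated_unique[OF W(1), of a b] by (auto split: if_splits)
  qed
  moreover have "finite ?Z" using finite_components by simp
  ultimately have "card ?Z \<le> 1" by (simp add: card_le_Suc0_iff_eq)
  then have isolated: "card ?S1 - 1 \<le> (\<Sum>C\<in>?S1. card (W \<inter> C))"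
    using finite_components by (intro card_minus_one_le_sum) auto
  have "cdim C (induced_edges E C) \<le> card (W \<inter> C)" if "C \<in> ?S2" for C
    using that cdim_le_card[OF finite_component resolving_Int_component[OF W(1)]] by blast
  then have nontrivial: "(\<Sum>C\<in>?S2. cdim C (induced_edges E C)) \<le> (\<Sum>C\<in>?S2. card (W \<inter> C))"
    by (rule sum_mono)
  have "(\<Sum>C\<in>?S1. card (W \<inter> C)) + (\<Sum>C\<in>?S2. card (W \<inter> C))
      = (\<Sum>C\<in>?S1 \<union> ?S2. card (W \<inter> C))"
    using finite_components by (intro sum.union_disjoint[symmetric]) auto
  also have "\<dots> \<le> (\<Sum>C\<in>components V E. card (W \<inter> C))"
    using finite_components by (intro sum_mono2) auto
  also have "\<dots> = cdim V E" using card_eq_sum_components[OF WV] W(2) by simp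
  finally show ?thesis using isolated nontrivial by linarith
qed

lemma resolving_Union_bases:
  assumes bases: "\<And>C. C \<in> components V E \<Longrightarrow> card C \<ge> 2 \<Longrightarrow> resolving C (induced_edges E C) (B C)"
    and "J \<subseteq> V"
    and isolated: "\<And>a b. {a} \<in> components V E \<Longrightarrow> {b} \<in> components V E \<Longrightarrow>
      a \<notin> J \<Longrightarrow> b \<notin> J \<Longrightarrow> a = b"
  shows "resolving V E (J \<union> (\<Union>C\<in>{C \<in> components V E. card C \<ge> 2}. B C))"
    (is "resolving V E ?W")
proof (rule resolving_by_components)
  have B_subset: "B C \<subseteq> C" if "C \<in> components V E" "card C \<ge> 2" for C
    using bases[OF that] unfolding resolving_def by blast
  then show "?W \<subseteq> V" using \<open>J \<subseteq> V\<close> component_subset by blast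
  fix C assume "C \<in> components V E" "card C \<ge> 2"
  then show "resolving C (induced_edges E C) (?W \<inter> C)"
    using B_subset by (intro resolving_mono[OF bases]) auto
next
  fix a b assume "{a} \<in> components V E" "{b} \<in> components V E" "a \<notin> ?W" "b \<notin> ?W"
  then show "a = b" using isolated by blast
qed

lemma cdim_upper_bound:
  "cdim V E \<le> card {C \<in> components V E. card C = 1} - 1
     + (\<Sum>C\<in>{C \<in> components V E. card C \<ge> 2}. cdim C (induced_edges E C))"
proof -
  let ?S1 = "{C \<in> components V E. card C = 1}" and ?S2 = "{C \<in> components V E. card C \<ge> 2}"
  have "\<forall>C\<in>?S2. \<exists>B. resolving C (induced_edges E C) B \<and> card B = cdim C (induced_edges E C)"
  proof
    fix C assume "C \<in> ?S2"
    then have "finite C" using finite_component by simp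
    then show "\<exists>B. resolving C (induced_edges E C) B \<and> card B = cdim C (induced_edges E C)"
      by (rule obtain_basis) blast
  qed
  from bchoice[OF this] obtain B where B: "\<forall>C\<in>?S2. resolving C (induced_edges E C) (B C) \<and>
      card (B C) = cdim C (induced_edges E C)"
    by blast
  let ?I = "\<Union>?S1"
  have "finite ?I" using finite_components finite_component by auto
  obtain J where J: "J \<subseteq> ?I" "card J \<le> card ?I - 1"
    "\<And>a b. a \<in> ?I \<Longrightarrow> b \<in> ?I \<Longrightarrow> a \<notin> J \<Longrightarrow> b \<notin> J \<Longrightarrow> a = b"
  proof (cases "?I = {}")
    case False
    then obtain a where "a \<in> ?I" by blast
    then show ?thesis using that[of "?I - {a}"] \<open>finite ?I\<close> by auto
  qed (rule that[of "{}"], auto)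
  have "sum card ?S1 = card ?S1"
    by (rule trans[OF sum.cong[OF refl] card_eq_sum[symmetric]]) simp
  then have "card ?I \<le> card ?S1" using card_Union_le_sum_card[of ?S1] by simp
  define W where "W = J \<union> (\<Union>C\<in>?S2. B C)"
  have "resolving V E W"
    unfolding W_def
  proof (rule resolving_Union_bases)
    show "J \<subseteq> V" using J(1) component_subset by blast
    fix a b assume "{a} \<in> components V E" "{b} \<in> components V E" "a \<notin> J" "b \<notin> J"
    moreover have "a \<in> ?I" "b \<in> ?I" using calculation(1,2) by force+
    ultimately show "a = b" using J(3) by blast
  qed (use B in simp)
  have "card W \<le> card J + card (\<Union>C\<in>?S2. B C)" unfolding W_def by (rule card_Un_le)
  moreover have "card (\<Union>C\<in>?S2. B C) \<le> (\<Sum>C\<in>?S2. cdim C (induced_edges E C))"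
    using card_UN_le[of ?S2 B] finite_components B by simp
  ultimately have "card W \<le> card ?S1 - 1 + (\<Sum>C\<in>?S2. cdim C (induced_edges E C))"
    using J(2) \<open>card ?I \<le> card ?S1\<close> by linarith
  then show ?thesis using cdim_le_card[OF finite_vertices \<open>resolving V E W\<close>] by linarith
qed

end

theorem mainTheorem1:
  fixes V :: "'a set" and E :: "('a \<times> 'a) set"
  assumes "graph V E"
  shows "cdim V E =
    (card {C \<in> components V E. card C = 1} - 1)
    + (\<Sum>C\<in>{C \<in> components V E. card C \<ge> 2}. cdim C (induced_edges E C))"
proof -
  interpret simple_graph V E by (rule simple_graph.intro[OF assms])
  show ?thesis using cdim_lower_bound cdim_upper_bound by (rule antisym[rotated])
qed

end
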